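(* Let $X,Y$ be Banach spaces, let $F:X\rightrightarrows Y$ be a closed convex set-valued mapping, let $A\subset X$ be a closed convex set, let $\bar y\in Y$, put $S:=F^{-1}(\bar y)\cap A$, and let $\bar x\in S$. Then $$\frac{1}{{\rm ssubreg}_AF(\bar x,\bar y)}=\sup\{\eta>0:\ DF^{-1}(\bar y,\bar x)(\eta_1B_Y)\cap(T(A,\bar x)+\eta_2B_X)\subset B_X\ \text{for all }\eta_1,\eta_2\ge0\text{ with }\eta_1+\eta_2<\eta\}.$$
   Context: $B_X,B_Y$ are the closed unit balls; $B(x,\delta)$ is the open ball. $F$ closed convex means ${\rm gph}(F)=\{(x,y):y\in F(x)\}$ is closed and convex in $X\times Y$. For a closed convex set $C$ and $a\in C$, the contingent cone $T(C,a)$ is the set of $v$ for which there exist $v_n\to v$, $t_n\to0^+$ with $a+t_nv_n\in C$ for all $n$. For $(x,y)\in{\rm gph}(F)$, $DF^{-1}(y,x)(v):=\{u\in X:(u,v)\in T({\rm gph}(F),(x,y))\}$ and $DF^{-1}(y,x)(W)=\bigcup_{v\in W}DF^{-1}(y,x)(v)$ for $W\subset Y$. The modulus of strong metric subregularity is ${\rm ssubreg}_AF(\bar x,\bar y):=\inf\{\tau>0:\exists\delta>0$ such that $\|x-\bar x\|\le\tau(d(\bar y,F(x))+d(x,A))$ for all $x\in B(\bar x,\delta)\}$, with $\inf\emptyset=+\infty$, $\sup\emptyset=0$, $1/(+\infty)=0$, $1/0=+\infty$. *)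

theory Defs
  imports "HOL-Analysis.Analysis"
begin

definition gph :: "('a \<Rightarrow> 'b set) \<Rightarrow> ('a \<times> 'b) set" where
  "gph F = {(x, y). y \<in> F x}"

definition contingent_cone :: "'a::real_normed_vector set \<Rightarrow> 'a \<Rightarrow> 'a set" where
  "contingent_cone C a = {v. \<exists>vs ts. vs \<longlonglongrightarrow> v \<and> ts \<longlonglongrightarrow> 0 \<and> (\<forall>n. ts n > (0::real))
        \<and> (\<forall>n. a + ts n *\<^sub>R vs n \<in> C)}"

definition DFinv :: "('a::real_normed_vector \<Rightarrow> 'b::real_normed_vector set) \<Rightarrow> 'b \<Rightarrow> 'a \<Rightarrow> 'b \<Rightarrow> 'a set" where
  "DFinv F y x v = {u. (u, v) \<in> contingent_cone (gph F) (x, y)}"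

definition DFinv_set :: "('a::real_normed_vector \<Rightarrow> 'b::real_normed_vector set) \<Rightarrow> 'b \<Rightarrow> 'a \<Rightarrow> 'b set \<Rightarrow> 'a set" where
  "DFinv_set F y x W = (\<Union>v\<in>W. DFinv F y x v)"

text \<open>Distance from a point to a set with the convention d(y, {}) = +infinity
  (Isabelle's infdist gives 0 on the empty set, so we use ereal).\<close>
definition dist_set :: "'a::metric_space \<Rightarrow> 'a set \<Rightarrow> ereal" where
  "dist_set y S = (if S = {} then \<infinity> else ereal (infdist y S))"

definition ssubreg :: "('a::real_normed_vector \<Rightarrow> 'b::real_normed_vector set) \<Rightarrow> 'a set \<Rightarrow> 'a \<Rightarrow> 'b \<Rightarrow> ereal" where
  "ssubreg F A xb yb = Inf {ereal \<tau> | \<tau>. \<tau> > 0 \<and> (\<exists>\<delta>>0. \<forall>x\<in>ball xb \<delta>.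
        ereal (norm (x - xb)) \<le> ereal \<tau> * (dist_set yb (F x) + dist_set x A))}"

definition recip :: "ereal \<Rightarrow> ereal" where
  "recip e = (if e = 0 then \<infinity> else if e = \<infinity> then 0 else ereal (1 / real_of_ereal e))"

definition sup0 :: "real set \<Rightarrow> ereal" where
  "sup0 S = (if S = {} then 0 else Sup (ereal ` S))"

end

theory Submission
  imports Defs
begin

text \<open>For convex data, the contingent cones contain all differences of points, so the
  subregularity estimate \<open>\<parallel>x - x\<^sub>0\<parallel> \<le> \<tau> (d(y\<^sub>0, F x) + d(x, A))\<close> holds near \<open>x\<^sub>0\<close> iff the tangential
  estimate \<open>\<parallel>u\<parallel> \<le> \<tau> (\<parallel>v\<parallel> + \<parallel>u - t\<parallel>)\<close> holds for all \<open>(u, v) \<in> T(gph F, (x\<^sub>0, y\<^sub>0))\<close> and \<open>t \<in> T(A, x\<^sub>0)\<close>: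
  one direction passes to the limit along tangent sequences, the other inserts the differences
  \<open>(x - x\<^sub>0, y - y\<^sub>0)\<close> and \<open>a - x\<^sub>0\<close> (and then the estimate even holds globally). By positive
  homogeneity of the cones, the tangential estimate with constant \<open>1/\<eta>\<close> is exactly the inclusion
  criterion with parameter \<open>\<eta>\<close>, so the two sets of constants correspond under \<open>\<tau> \<mapsto> 1/\<tau>\<close>, and
  inverting the infimum gives the supremum.\<close>

lemma recip_eq_inverse: "recip e = inverse e"
  by (cases e) (auto simp: recip_def inverse_eq_divide)

lemma inverse_Inf_ereal:
  fixes T :: "ereal set"
  assumes "T \<noteq> {}" and "\<And>x. x \<in> T \<Longrightarrow> 0 \<le> x"
  shows "inverse (Inf T) = (SUP x\<in>T. inverse x)"
proof -
  \<comment> \<open>\<open>inverse\<close> is not antimonotone on negative arguments; \<open>inv\<close> agrees with it on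
    nonnegative ones and is antimonotone and continuous everywhere\<close>
  define inv where "inv x = (if x \<le> 0 then \<infinity> else inverse x)" for x :: ereal
  have "continuous_on ({..0} \<union> {0..}) inv" unfolding inv_def
    by (intro continuous_on_If) (auto intro!: continuous_intros)
  also have "{..0} \<union> {0..} = (UNIV :: ereal set)" by auto
  finally have "continuous (at_right (Inf T)) inv"
    by (simp add: continuous_on_eq_continuous_at continuous_at_imp_continuous_at_within)
  moreover have "antimono inv"
    unfolding inv_def antimono_def by (auto intro!: ereal_inverse_antimono)
  ultimately have "inv (Inf T) = (SUP x\<in>T. inv x)"
    using assms(1) by (intro continuous_at_Inf_antimono) auto
  moreover have "inv x = inverse x" if "0 \<le> x" for x
    using that by (auto simp: inv_def)
  moreover have "0 \<le> Inf T" using assms(2) by (rule Inf_greatest)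
  ultimately show ?thesis using assms(2) by simp
qed

lemma recip_Inf_eq_sup0:
  assumes "\<And>\<tau>. \<tau> \<in> S \<Longrightarrow> (\<tau>::real) > 0"
  shows "recip (Inf (ereal ` S)) = sup0 ((\<lambda>\<tau>. 1 / \<tau>) ` S)"
proof (cases "S = {}")
  case True then show ?thesis by (simp add: recip_def sup0_def top_ereal_def)
next
  case False
  have "recip (Inf (ereal ` S)) = (SUP \<tau>\<in>S. inverse (ereal \<tau>))"
    unfolding recip_eq_inverse using False assms
    by (subst inverse_Inf_ereal) (auto simp: image_image less_imp_le)
  also have "\<dots> = Sup (ereal ` (\<lambda>\<tau>. 1 / \<tau>) ` S)"
    unfolding image_image using assms by (intro SUP_cong) (auto simp: inverse_eq_divide)
  finally show ?thesis using False by (simp add: sup0_def)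
qed

lemma infdist_greatest:
  assumes "A \<noteq> {}" and "\<And>a. a \<in> A \<Longrightarrow> c \<le> dist x a"
  shows "c \<le> infdist x A"
  unfolding infdist_notempty[OF assms(1)] using assms by (intro cINF_greatest)

lemma infdist_sum_greatest:
  assumes "A \<noteq> {}" "B \<noteq> {}" and "\<And>a b. a \<in> A \<Longrightarrow> b \<in> B \<Longrightarrow> c \<le> dist x a + dist y b"
  shows "c \<le> infdist x A + infdist y B"
proof -
  have "c - infdist y B \<le> dist x a" if "a \<in> A" for a
  proof -
    have "c - dist x a \<le> infdist y B"
      using assms(2,3) \<open>a \<in> A\<close> by (intro infdist_greatest) (auto simp: algebra_simps)
    then show ?thesis by simp
  qed
  then have "c - infdist y B \<le> infdist x A" using assms(1) by (intro infdist_greatest)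
  then show ?thesis by simp
qed

definition subreg_estimate ::
    "('a::real_normed_vector \<Rightarrow> 'b::real_normed_vector set) \<Rightarrow> 'a set \<Rightarrow> 'a \<Rightarrow> 'b \<Rightarrow> real \<Rightarrow> real \<Rightarrow> bool"
  where "subreg_estimate F A xb yb \<tau> \<delta> \<longleftrightarrow>
    (\<forall>x\<in>ball xb \<delta>. \<forall>y\<in>F x. \<forall>a\<in>A. norm (x - xb) \<le> \<tau> * (dist yb y + dist x a))"

lemma dist_set_estimate_iff_subreg_estimate:
  assumes "A \<noteq> {}" and "\<tau> > 0"
  shows "(\<forall>x\<in>ball xb \<delta>. ereal (norm (x - xb)) \<le> ereal \<tau> * (dist_set yb (F x) + dist_set x A))
    \<longleftrightarrow> subreg_estimate F A xb yb \<tau> \<delta>"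
proof -
  have "ereal (norm (x - xb)) \<le> ereal \<tau> * (dist_set yb (F x) + dist_set x A) \<longleftrightarrow>
      (\<forall>y\<in>F x. \<forall>a\<in>A. norm (x - xb) \<le> \<tau> * (dist yb y + dist x a))" for x
  proof (cases "F x = {}")
    case True then show ?thesis using assms by (simp add: dist_set_def)
  next
    case False
    have "norm (x - xb) \<le> \<tau> * (infdist yb (F x) + infdist x A) \<longleftrightarrow>
        (\<forall>y\<in>F x. \<forall>a\<in>A. norm (x - xb) \<le> \<tau> * (dist yb y + dist x a))"
    proof
      assume le: "norm (x - xb) \<le> \<tau> * (infdist yb (F x) + infdist x A)"
      show "\<forall>y\<in>F x. \<forall>a\<in>A. norm (x - xb) \<le> \<tau> * (dist yb y + dist x a)"
        using assms(2) by (auto intro!: order.trans[OF le] mult_left_mono add_mono infdist_le)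
    next
      assume "\<forall>y\<in>F x. \<forall>a\<in>A. norm (x - xb) \<le> \<tau> * (dist yb y + dist x a)"
      then have "norm (x - xb) / \<tau> \<le> infdist yb (F x) + infdist x A"
        using False assms by (intro infdist_sum_greatest) (auto simp: pos_divide_le_eq mult.commute)
      then show "norm (x - xb) \<le> \<tau> * (infdist yb (F x) + infdist x A)"
        using assms(2) by (simp add: pos_divide_le_eq mult.commute)
    qed
    then show ?thesis using False assms(1) by (simp add: dist_set_def)
  qed
  then show ?thesis unfolding subreg_estimate_def by simp
qed

lemma scaleR_mem_contingent_cone:
  assumes "v \<in> contingent_cone C a" and "c > 0"
  shows "c *\<^sub>R v \<in> contingent_cone C a"
proof -
  from assms(1) obtain vs ts where "vs \<longlonglongrightarrow> v" "ts \<longlonglongrightarrow> 0" "\<forall>n. ts n > (0::real)"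
      "\<forall>n. a + ts n *\<^sub>R vs n \<in> C"
    unfolding contingent_cone_def by blast
  moreover have "a + (ts n / c) *\<^sub>R (c *\<^sub>R vs n) = a + ts n *\<^sub>R vs n" for n
    using assms(2) by simp
  ultimately show ?thesis
    unfolding contingent_cone_def using assms(2)
    by (intro CollectI exI[of _ "\<lambda>n. c *\<^sub>R vs n"] exI[of _ "\<lambda>n. ts n / c"])
      (auto intro: tendsto_intros tendsto_divide_zero)
qed

lemma convex_mem_ray_shrink:
  assumes "convex A" "a \<in> A" "a + s *\<^sub>R w \<in> A" "0 \<le> t" "t \<le> s"
  shows "a + t *\<^sub>R w \<in> A"
proof (cases "s = 0")
  case True then show ?thesis using assms by simp
next
  case False
  then have "(1 - t/s) *\<^sub>R a + (t/s) *\<^sub>R (a + s *\<^sub>R w) \<in> A"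
    using assms by (intro convexD_alt) auto
  moreover have "(1 - t/s) *\<^sub>R a + (t/s) *\<^sub>R (a + s *\<^sub>R w) = a + t *\<^sub>R w"
    using False by (simp add: algebra_simps)
  ultimately show ?thesis by simp
qed

lemma convex_diff_mem_contingent_cone:
  assumes "convex C" "a \<in> C" "c \<in> C"
  shows "c - a \<in> contingent_cone C a"
proof -
  have "a + inverse (real (Suc n)) *\<^sub>R (c - a) \<in> C" for n
    by (rule convex_mem_ray_shrink[OF assms(1,2), of 1]) (simp_all add: assms(3) inverse_le_1_iff)
  then show ?thesis unfolding contingent_cone_def
    by (intro CollectI exI[of _ "\<lambda>n. c - a"] exI[of _ "\<lambda>n. inverse (real (Suc n))"])
      (use LIMSEQ_inverse_real_of_nat in auto)
qed

definition tangent_estimate ::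
    "('a::real_normed_vector \<Rightarrow> 'b::real_normed_vector set) \<Rightarrow> 'a set \<Rightarrow> 'a \<Rightarrow> 'b \<Rightarrow> real \<Rightarrow> bool"
  where "tangent_estimate F A xb yb \<tau> \<longleftrightarrow>
    (\<forall>u v t. (u, v) \<in> contingent_cone (gph F) (xb, yb) \<longrightarrow> t \<in> contingent_cone A xb
      \<longrightarrow> norm u \<le> \<tau> * (norm v + norm (u - t)))"

lemma subreg_estimate_scaled:
  assumes "subreg_estimate F A xb yb \<tau> \<delta>" "s > 0" "norm (s *\<^sub>R p) < \<delta>"
    and "yb + s *\<^sub>R q \<in> F (xb + s *\<^sub>R p)" "xb + s *\<^sub>R w \<in> A"
  shows "norm p \<le> \<tau> * (norm q + norm (p - w))"
proof -
  have "xb + s *\<^sub>R p \<in> ball xb \<delta>" using assms(3) by (simp add: dist_norm)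
  with assms(1,4,5) have "norm ((xb + s *\<^sub>R p) - xb) \<le>
      \<tau> * (dist yb (yb + s *\<^sub>R q) + dist (xb + s *\<^sub>R p) (xb + s *\<^sub>R w))"
    unfolding subreg_estimate_def by blast
  then have "norm (s *\<^sub>R p) \<le> \<tau> * (norm (s *\<^sub>R q) + norm (s *\<^sub>R p - s *\<^sub>R w))"
    by (simp add: dist_norm)
  then have "s * norm p \<le> \<tau> * (s * norm q + s * norm (p - w))"
    using assms(2) by (simp flip: scaleR_diff_right)
  also have "\<dots> = s * (\<tau> * (norm q + norm (p - w)))"
    by (simp add: algebra_simps)
  finally show ?thesis using assms(2) by simp
qed

lemma subreg_estimate_imp_feasible_direction_estimate:
  assumes "subreg_estimate F A xb yb \<tau> \<delta>" "\<delta> > 0" "convex A" "xb \<in> A"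
    and "(u, v) \<in> contingent_cone (gph F) (xb, yb)" and "r > 0" "xb + r *\<^sub>R w \<in> A"
  shows "norm u \<le> \<tau> * (norm v + norm (u - w))"
proof -
  from assms(5) obtain us ts where us: "us \<longlonglongrightarrow> (u, v)" and ts: "ts \<longlonglongrightarrow> 0" "\<forall>n. ts n > (0::real)"
      and gph: "\<forall>n. (xb, yb) + ts n *\<^sub>R us n \<in> gph F"
    unfolding contingent_cone_def by blast
  have fst: "(\<lambda>n. fst (us n)) \<longlonglongrightarrow> u" and snd: "(\<lambda>n. snd (us n)) \<longlonglongrightarrow> v"
    using tendsto_fst[OF us] tendsto_snd[OF us] by simp_all
  have "(\<lambda>n. ts n *\<^sub>R fst (us n)) \<longlonglongrightarrow> 0"
    using tendsto_scaleR[OF ts(1) fst] by simp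
  then have "\<forall>\<^sub>F n in sequentially. norm (ts n *\<^sub>R fst (us n)) < \<delta>"
    using assms(2) by (auto dest: tendstoD)
  moreover have "\<forall>\<^sub>F n in sequentially. ts n < r"
    using tendstoD[OF ts(1) assms(6)] by (rule eventually_mono) simp
  ultimately have "\<forall>\<^sub>F n in sequentially.
      norm (fst (us n)) \<le> \<tau> * (norm (snd (us n)) + norm (fst (us n) - w))"
  proof eventually_elim
    case (elim n)
    \<comment> \<open>convexity of \<open>A\<close> makes \<open>w\<close> feasible at the step size \<open>ts n\<close> of the graph sequence\<close>
    then have "xb + ts n *\<^sub>R w \<in> A"
      using convex_mem_ray_shrink[OF assms(3,4,7)] ts(2) by (simp add: less_imp_le)
    moreover have "yb + ts n *\<^sub>R snd (us n) \<in> F (xb + ts n *\<^sub>R fst (us n))"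
      using gph[rule_format, of n] by (simp add: gph_def case_prod_unfold)
    ultimately show ?case
      using subreg_estimate_scaled[OF assms(1)] ts(2) elim by blast
  qed
  moreover have "(\<lambda>n. \<tau> * (norm (snd (us n)) + norm (fst (us n) - w)))
      \<longlonglongrightarrow> \<tau> * (norm v + norm (u - w))"
    by (intro tendsto_intros fst snd)
  ultimately show ?thesis
    using tendsto_le[OF trivial_limit_sequentially] tendsto_norm[OF fst] by blast
qed

lemma subreg_estimate_imp_tangent_estimate:
  assumes "subreg_estimate F A xb yb \<tau> \<delta>" "\<delta> > 0" "convex A" "xb \<in> A"
  shows "tangent_estimate F A xb yb \<tau>"
  unfolding tangent_estimate_def
proof (intro allI impI)
  fix u v t assume uv: "(u, v) \<in> contingent_cone (gph F) (xb, yb)" and "t \<in> contingent_cone A xb"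
  then obtain ws ss where ws: "ws \<longlonglongrightarrow> t" and "\<forall>k. ss k > (0::real)" "\<forall>k. xb + ss k *\<^sub>R ws k \<in> A"
    unfolding contingent_cone_def by blast
  then have "norm u \<le> \<tau> * (norm v + norm (u - ws k))" for k
    using subreg_estimate_imp_feasible_direction_estimate[OF assms uv] by blast
  then show "norm u \<le> \<tau> * (norm v + norm (u - t))"
    by (intro LIMSEQ_le_const[of "\<lambda>k. \<tau> * (norm v + norm (u - ws k))"]) (auto intro!: tendsto_intros ws)
qed

lemma tangent_estimate_imp_subreg_estimate:
  assumes "tangent_estimate F A xb yb \<tau>" "convex (gph F)" "convex A" "xb \<in> A" "yb \<in> F xb"
  shows "subreg_estimate F A xb yb \<tau> \<delta>"
  unfolding subreg_estimate_def
proof (intro ballI)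
  fix x y a assume "y \<in> F x" "a \<in> A"
  then have "(x, y) - (xb, yb) \<in> contingent_cone (gph F) (xb, yb)"
    using assms(2,5) by (intro convex_diff_mem_contingent_cone) (auto simp: gph_def)
  then have "(x - xb, y - yb) \<in> contingent_cone (gph F) (xb, yb)" by simp
  moreover have "a - xb \<in> contingent_cone A xb"
    using assms(3,4) \<open>a \<in> A\<close> by (rule convex_diff_mem_contingent_cone)
  ultimately have "norm (x - xb) \<le> \<tau> * (norm (y - yb) + norm ((x - xb) - (a - xb)))"
    using assms(1) unfolding tangent_estimate_def by blast
  then show "norm (x - xb) \<le> \<tau> * (dist yb y + dist x a)"
    by (simp add: dist_norm norm_minus_commute)
qed

lemma mem_scaleR_cball_iff:
  fixes w :: "'a::real_normed_vector"
  assumes "c \<ge> 0"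
  shows "w \<in> (\<lambda>u. c *\<^sub>R u) ` cball 0 1 \<longleftrightarrow> norm w \<le> c"
proof
  assume "norm w \<le> c"
  show "w \<in> (\<lambda>u. c *\<^sub>R u) ` cball 0 1"
  proof (cases "c = 0")
    case True then show ?thesis using \<open>norm w \<le> c\<close> by (auto intro: image_eqI[of _ _ 0])
  next
    case False
    then have "norm (w /\<^sub>R c) \<le> 1"
      using assms \<open>norm w \<le> c\<close> by (simp add: divide_inverse_commute[symmetric] divide_le_eq_1)
    moreover have "w = c *\<^sub>R (w /\<^sub>R c)" using False by simp
    ultimately show ?thesis by (metis image_eqI mem_cball_0)
  qed
qed (use assms in \<open>auto simp: mult_left_le\<close>)

abbreviation derivative_test_set ::
    "('a::real_normed_vector \<Rightarrow> 'b::real_normed_vector set) \<Rightarrow> 'a set \<Rightarrow> 'a \<Rightarrow> 'b \<Rightarrow> real \<Rightarrow> real \<Rightarrow> 'a set"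
  where "derivative_test_set F A xb yb \<eta>1 \<eta>2 \<equiv>
    DFinv_set F yb xb ((\<lambda>v. \<eta>1 *\<^sub>R v) ` cball 0 1)
      \<inter> {t + b | t b. t \<in> contingent_cone A xb \<and> b \<in> (\<lambda>u. \<eta>2 *\<^sub>R u) ` cball 0 1}"

abbreviation derivative_criterion ::
    "('a::real_normed_vector \<Rightarrow> 'b::real_normed_vector set) \<Rightarrow> 'a set \<Rightarrow> 'a \<Rightarrow> 'b \<Rightarrow> real \<Rightarrow> bool"
  where "derivative_criterion F A xb yb \<eta> \<equiv>
    \<forall>\<eta>1 \<eta>2. \<eta>1 \<ge> 0 \<and> \<eta>2 \<ge> 0 \<and> \<eta>1 + \<eta>2 < \<eta> \<longrightarrow> derivative_test_set F A xb yb \<eta>1 \<eta>2 \<subseteq> cball 0 1"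

lemma mem_derivative_test_set_iff:
  fixes F :: "'a::real_normed_vector \<Rightarrow> 'b::real_normed_vector set"
  assumes "\<eta>1 \<ge> 0" "\<eta>2 \<ge> 0"
  shows "z \<in> derivative_test_set F A xb yb \<eta>1 \<eta>2 \<longleftrightarrow>
    (\<exists>v. norm v \<le> \<eta>1 \<and> (z, v) \<in> contingent_cone (gph F) (xb, yb))
      \<and> (\<exists>t\<in>contingent_cone A xb. norm (z - t) \<le> \<eta>2)"
proof -
  have "z \<in> DFinv_set F yb xb W \<longleftrightarrow> (\<exists>v\<in>W. (z, v) \<in> contingent_cone (gph F) (xb, yb))" for W
    by (simp add: DFinv_set_def DFinv_def)
  moreover have "(\<exists>t b. z = t + b \<and> t \<in> T \<and> norm b \<le> e) \<longleftrightarrow> (\<exists>t\<in>T. norm (z - t) \<le> e)"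
    for T :: "'a set" and e
    by (metis add_diff_cancel_left' diff_add_cancel add.commute)
  ultimately show ?thesis
    unfolding Bex_def using assms by (simp add: mem_scaleR_cball_iff)
qed

lemma tangent_estimate_inverse_iff:
  assumes "\<eta> > 0"
  shows "tangent_estimate F A xb yb (1 / \<eta>) \<longleftrightarrow>
    (\<forall>u v t. (u, v) \<in> contingent_cone (gph F) (xb, yb) \<longrightarrow> t \<in> contingent_cone A xb
      \<longrightarrow> \<eta> * norm u \<le> norm v + norm (u - t))"
  unfolding tangent_estimate_def using assms by (simp add: field_simps)

lemma tangent_estimate_imp_derivative_criterion:
  assumes "\<eta> > 0" "tangent_estimate F A xb yb (1 / \<eta>)"
  shows "derivative_criterion F A xb yb \<eta>"
proof (intro allI impI subsetI)
  fix \<eta>1 \<eta>2 z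
  assume \<eta>: "\<eta>1 \<ge> 0 \<and> \<eta>2 \<ge> 0 \<and> \<eta>1 + \<eta>2 < \<eta>" and "z \<in> derivative_test_set F A xb yb \<eta>1 \<eta>2"
  then obtain v t where "norm v \<le> \<eta>1" "(z, v) \<in> contingent_cone (gph F) (xb, yb)"
      "t \<in> contingent_cone A xb" "norm (z - t) \<le> \<eta>2"
    using mem_derivative_test_set_iff by blast
  moreover have "\<eta> * norm z \<le> norm v + norm (z - t)"
    using assms \<open>(z, v) \<in> _\<close> \<open>t \<in> _\<close> unfolding tangent_estimate_inverse_iff[OF assms(1)] by blast
  ultimately have "\<eta> * norm z \<le> \<eta>1 + \<eta>2" by linarith
  then have "\<eta> * norm z < \<eta> * 1" using \<eta> by linarith
  then show "z \<in> cball 0 1" using assms(1) by simp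
qed

lemma derivative_criterion_imp_tangent_estimate:
  fixes F :: "'a::real_normed_vector \<Rightarrow> 'b::real_normed_vector set"
  assumes "\<eta> > 0" "derivative_criterion F A xb yb \<eta>"
  shows "tangent_estimate F A xb yb (1 / \<eta>)"
  unfolding tangent_estimate_inverse_iff[OF assms(1)]
proof (intro allI impI)
  fix u v t
  assume uv: "(u, v) \<in> contingent_cone (gph F) (xb, yb)" and t: "t \<in> contingent_cone A xb"
  define s where "s = norm v + norm (u - t)"
  show "\<eta> * norm u \<le> s"
  proof (rule ccontr)
    assume "\<not> \<eta> * norm u \<le> s"
    then have su: "s < \<eta> * norm u" by simp
    have "s \<ge> 0" by (simp add: s_def)
    \<comment> \<open>rescale so that \<open>l u\<close> leaves the unit ball while \<open>l s\<close> stays below \<open>\<eta>\<close>\<close>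
    define l where "l = 2 * \<eta> / (\<eta> * norm u + s)"
    have l: "l > 0" "l * norm u > 1" "l * s < \<eta>"
      using su \<open>s \<ge> 0\<close> assms(1) by (auto simp: l_def field_simps)
    define \<eta>1 where "\<eta>1 = l * norm v"
    define \<eta>2 where "\<eta>2 = (l * norm (u - t) + \<eta> - \<eta>1) / 2"
    have "l * norm (u - t) < \<eta> - \<eta>1"
      using l by (simp add: \<eta>1_def s_def algebra_simps)
    moreover have "\<eta>1 \<ge> 0" "l * norm (u - t) \<ge> 0" using l(1) by (simp_all add: \<eta>1_def)
    ultimately have \<eta>: "\<eta>1 \<ge> 0" "\<eta>2 \<ge> 0" "\<eta>1 + \<eta>2 < \<eta>" "l * norm (u - t) \<le> \<eta>2"
      by (simp_all add: \<eta>2_def add_divide_distrib diff_divide_distrib)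
    have "(l *\<^sub>R u, l *\<^sub>R v) \<in> contingent_cone (gph F) (xb, yb)"
      using scaleR_mem_contingent_cone[OF uv l(1)] by simp
    moreover have "norm (l *\<^sub>R v) \<le> \<eta>1" using l(1) by (simp add: \<eta>1_def)
    moreover have "l *\<^sub>R t \<in> contingent_cone A xb"
      using scaleR_mem_contingent_cone[OF t l(1)] .
    moreover have "norm (l *\<^sub>R u - l *\<^sub>R t) \<le> \<eta>2"
      using \<eta>(4) l(1) by (simp flip: scaleR_diff_right)
    ultimately have "l *\<^sub>R u \<in> derivative_test_set F A xb yb \<eta>1 \<eta>2"
      unfolding mem_derivative_test_set_iff[OF \<eta>(1,2)] by blast
    then have "l *\<^sub>R u \<in> cball 0 1" using assms(2) \<eta>(1-3) by blast
    then show False using l by simp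
  qed
qed

lemma derivative_criterion_set_eq:
  fixes F :: "'a::real_normed_vector \<Rightarrow> 'b::real_normed_vector set"
  shows "{\<eta>. \<eta> > 0 \<and> derivative_criterion F A xb yb \<eta>}
    = (\<lambda>\<tau>. 1 / \<tau>) ` {\<tau>. \<tau> > 0 \<and> tangent_estimate F A xb yb \<tau>}"
proof -
  have criterion_iff: "derivative_criterion F A xb yb \<eta> \<longleftrightarrow> tangent_estimate F A xb yb (1 / \<eta>)"
    if "\<eta> > 0" for \<eta>
    using derivative_criterion_imp_tangent_estimate[OF that]
      tangent_estimate_imp_derivative_criterion[OF that] ..
  have "{\<eta>. \<eta> > 0 \<and> derivative_criterion F A xb yb \<eta>}
      = {\<eta>. \<eta> > 0 \<and> tangent_estimate F A xb yb (1 / \<eta>)}"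
    by (intro Collect_cong conj_cong refl criterion_iff)
  also have "\<dots> = (\<lambda>\<tau>. 1 / \<tau>) ` {\<tau>. \<tau> > 0 \<and> tangent_estimate F A xb yb \<tau>}"
    by (auto intro!: image_eqI[where x = "1 / _"])
  finally show ?thesis .
qed

lemma ssubreg_eq_Inf_tangent_estimate:
  assumes "convex (gph F)" "convex A" "xb \<in> A" "yb \<in> F xb"
  shows "ssubreg F A xb yb = Inf (ereal ` {\<tau>. \<tau> > 0 \<and> tangent_estimate F A xb yb \<tau>})"
proof -
  have "(\<exists>\<delta>>0. \<forall>x\<in>ball xb \<delta>. ereal (norm (x - xb)) \<le> ereal \<tau> * (dist_set yb (F x) + dist_set x A))
      \<longleftrightarrow> tangent_estimate F A xb yb \<tau>" if "\<tau> > 0" for \<tau>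
    using that assms dist_set_estimate_iff_subreg_estimate[of A \<tau>]
      subreg_estimate_imp_tangent_estimate tangent_estimate_imp_subreg_estimate
    by (metis empty_iff zero_less_one)
  then show ?thesis unfolding ssubreg_def by (intro arg_cong[where f = Inf]) auto
qed

theorem theorem3p3:
  fixes F :: "'a::banach \<Rightarrow> 'b::banach set"
    and A :: "'a set" and xb :: 'a and yb :: 'b
  assumes "closed (gph F)" and "convex (gph F)"
    and "closed A" and "convex A"
    and "xb \<in> {x. yb \<in> F x} \<inter> A"
  shows "recip (ssubreg F A xb yb) =
    sup0 {\<eta>. \<eta> > 0 \<and> (\<forall>\<eta>1 \<eta>2. \<eta>1 \<ge> 0 \<and> \<eta>2 \<ge> 0 \<and> \<eta>1 + \<eta>2 < \<eta> \<longrightarrow>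
        DFinv_set F yb xb ((\<lambda>v. \<eta>1 *\<^sub>R v) ` cball 0 1)
          \<inter> {t + b | t b. t \<in> contingent_cone A xb \<and> b \<in> (\<lambda>u. \<eta>2 *\<^sub>R u) ` cball 0 1}
        \<subseteq> cball 0 1)}"
proof -
  have "xb \<in> A" "yb \<in> F xb" using assms(5) by auto
  then have "recip (ssubreg F A xb yb)
      = recip (Inf (ereal ` {\<tau>. \<tau> > 0 \<and> tangent_estimate F A xb yb \<tau>}))"
    using assms(2,4) by (simp add: ssubreg_eq_Inf_tangent_estimate)
  also have "\<dots> = sup0 ((\<lambda>\<tau>. 1 / \<tau>) ` {\<tau>. \<tau> > 0 \<and> tangent_estimate F A xb yb \<tau>})"
    by (rule recip_Inf_eq_sup0) simp
  finally show ?thesis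
    by (simp only: derivative_criterion_set_eq)
qed

end
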